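(* Let $G$ be a simple graph of order $n$. If $$\mu(G) > -\frac{1}{2}+\sqrt{\left(n-\frac{3}{2}\right)^2+2},$$ then $G$ is Hamilton-connected unless $G=K_{n-1}+e+e'$.
   Context: For a simple graph $G$, $\mu(G)$ denotes the largest eigenvalue (spectral radius) of the adjacency matrix $A(G)$. A graph is Hamilton-connected if every two distinct vertices are joined by a Hamiltonian path (a path containing all vertices). $K_{n-1}+e+e'$ denotes the graph obtained from the complete graph $K_{n-1}$ by adding one new vertex and joining it by two edges $e,e'$ to two vertices of $K_{n-1}$. *)

theory Defs
  imports "HOL-Analysis.Analysis"
begin

text \<open>A simple graph on the finite vertex type 'a (vertex set = UNIV, order = CARD('a)),
  given by a symmetric irreflexive adjacency relation E.\<close>

definition simple_graph :: "('a \<Rightarrow> 'a \<Rightarrow> bool) \<Rightarrow> bool" where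
  "simple_graph E \<longleftrightarrow> (\<forall>x y. E x y \<longrightarrow> E y x) \<and> (\<forall>x. \<not> E x x)"

definition adj_matrix :: "('a::finite \<Rightarrow> 'a \<Rightarrow> bool) \<Rightarrow> real^'a^'a" where
  "adj_matrix E = (\<chi> i j. if E i j then 1 else 0)"

text \<open>Largest eigenvalue of a real square matrix (all eigenvalues of a symmetric
  matrix are real).\<close>

definition largest_eigenvalue :: "real^'n^'n \<Rightarrow> real" where
  "largest_eigenvalue A = Max {c. \<exists>v. v \<noteq> 0 \<and> A *v v = c *\<^sub>R v}"

definition spectral_radius_graph :: "('a::finite \<Rightarrow> 'a \<Rightarrow> bool) \<Rightarrow> real" where
  "spectral_radius_graph E = largest_eigenvalue (adj_matrix E)"

definition ham_path :: "('a::finite \<Rightarrow> 'a \<Rightarrow> bool) \<Rightarrow> 'a \<Rightarrow> 'a \<Rightarrow> 'a list \<Rightarrow> bool" where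
  "ham_path E u v p \<longleftrightarrow> distinct p \<and> set p = UNIV \<and> p \<noteq> [] \<and> hd p = u \<and> last p = v \<and>
     (\<forall>i. Suc i < length p \<longrightarrow> E (p ! i) (p ! Suc i))"

definition hamilton_connected :: "('a::finite \<Rightarrow> 'a \<Rightarrow> bool) \<Rightarrow> bool" where
  "hamilton_connected E \<longleftrightarrow> (\<forall>u v. u \<noteq> v \<longrightarrow> (\<exists>p. ham_path E u v p))"

text \<open>E is (a labelled copy of) K_{n-1}+e+e': complete graph on all vertices but w,
  plus the two edges wa, wb with a, b distinct vertices of the K_{n-1}.\<close>

definition is_K_minus_plus_two :: "('a \<Rightarrow> 'a \<Rightarrow> bool) \<Rightarrow> bool" where
  "is_K_minus_plus_two E \<longleftrightarrow> (\<exists>w a b. a \<noteq> b \<and> a \<noteq> w \<and> b \<noteq> w \<and>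
     (\<forall>x y. E x y \<longleftrightarrow> ((x \<noteq> y \<and> x \<noteq> w \<and> y \<noteq> w) \<or> {x, y} = {w, a} \<or> {x, y} = {w, b})))"

end

theory Submission
  imports Defs
begin

text \<open>The spectral radius \<open>\<mu>\<close> is an eigenvalue of the symmetric adjacency matrix, and Stanley's
  bound \<open>\<mu>\<^sup>2 + \<mu> \<le> 2m\<close> turns the hypothesis into: the complement of \<open>G\<close> has at most \<open>n - 3\<close>
  edges. If \<open>xy\<close> is a non-edge with \<open>d(x) + d(y) \<ge> n + 1\<close>, a Hamiltonian path of \<open>G + xy\<close>
  through \<open>xy\<close> can be rerouted by a 2-opt exchange, so \<open>G\<close> is Hamilton-connected whenever
  \<open>G + xy\<close> is. With at most \<open>n - 4\<close> non-edges every non-edge qualifies, so by induction such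
  graphs are Hamilton-connected. With \<open>n - 3\<close> non-edges, either some non-edge qualifies and
  adding it reduces to that case, or counting shows that any two non-edges meet. Then they form a
  star, which forces \<open>G = K_{n-1}+e+e'\<close>, or a triangle, which forces \<open>n = 6\<close>; but \<open>K\<^sub>6\<close> minus a
  triangle has spectral radius \<open>1 + \<surd>10\<close>, too small for the hypothesis.\<close>

section \<open>Eigenvectors of symmetric matrices\<close>

lemma symmetric_matrix_inner_commute:
  fixes A :: "real^'n^'n"
  assumes "transpose A = A"
  shows "x \<bullet> (A *v y) = y \<bullet> (A *v x)"
  by (metis assms dot_lmul_matrix inner_commute transpose_matrix_vector)

lemma psd_form_zero_imp_kernel:
  fixes B :: "real^'n^'n"
  assumes sym: "transpose B = B" and psd: "\<And>y. 0 \<le> y \<bullet> (B *v y)"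
    and zero: "x \<bullet> (B *v x) = 0"
  shows "B *v x = 0"
proof (rule ccontr)
  assume "B *v x \<noteq> 0"
  define z where "z = B *v x"
  define b where "b = z \<bullet> z"
  define c where "c = z \<bullet> (B *v z)"
  have b: "b > 0" using \<open>B *v x \<noteq> 0\<close> by (simp add: b_def z_def)
  have c: "c \<ge> 0" unfolding c_def by (rule psd)
  have expand: "(x + t *\<^sub>R z) \<bullet> (B *v (x + t *\<^sub>R z)) = 2 * t * b + t\<^sup>2 * c" for t
    using zero symmetric_matrix_inner_commute[OF sym, of x z]
    by (simp add: b_def c_def z_def matrix_vector_right_distrib matrix_vector_mult_scaleR inner_add_left inner_add_right power2_eq_square algebra_simps)
  \<comment> \<open>Moving from \<open>x\<close> a short distance against \<open>z\<close> makes the form negative.\<close>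
  define t where "t = - b / (c + 1)"
  have "t < 0" using b c by (simp add: t_def)
  have "t * c \<ge> - b"
    using b c by (simp add: t_def field_simps)
  hence "t * (t * c) \<le> t * (- b)"
    using \<open>t < 0\<close> by (intro mult_left_mono_neg) auto
  hence "t\<^sup>2 * c \<le> t * (- b)" by (simp add: power2_eq_square mult.assoc)
  moreover have "t * b < 0" using \<open>t < 0\<close> b by (rule mult_neg_pos)
  ultimately have "2 * t * b + t\<^sup>2 * c < 0" by simp
  thus False using psd[of "x + t *\<^sub>R z"] expand[of t] by linarith
qed

lemma symmetric_matrix_has_eigenvector:
  fixes A :: "real^'n^'n"
  assumes sym: "transpose A = A"
  shows "\<exists>c v. v \<noteq> 0 \<and> A *v v = c *\<^sub>R v"
proof -
  let ?f = "\<lambda>x::real^'n. x \<bullet> (A *v x)"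
  have "continuous_on (sphere 0 1) ?f"
    by (intro continuous_intros linear_continuous_on matrix_vector_mul_linear
          linear_linear[THEN iffD1])
  then obtain x where x: "x \<in> sphere 0 1" and max: "\<And>y. y \<in> sphere 0 1 \<Longrightarrow> ?f y \<le> ?f x"
    using continuous_attains_sup[of "sphere (0::real^'n) 1" ?f] by auto
  define mu where "mu = ?f x"
  have rayleigh: "y \<bullet> (A *v y) \<le> mu * (y \<bullet> y)" for y
  proof (cases "y = 0")
    case False
    have "?f ((1 / norm y) *\<^sub>R y) \<le> mu"
      using max[of "(1 / norm y) *\<^sub>R y"] False by (simp add: mu_def)
    hence "(y \<bullet> (A *v y)) / (norm y)\<^sup>2 \<le> mu"
      by (simp add: matrix_vector_mult_scaleR power2_eq_square)
    thus ?thesis using False by (simp add: divide_le_eq dot_square_norm)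
  qed simp
  define B where "B = mu *\<^sub>R mat 1 - A"
  have Bv: "B *v y = mu *\<^sub>R y - A *v y" for y
    by (simp add: B_def matrix_vector_mult_diff_rdistrib scaleR_matrix_vector_assoc[symmetric])
  have "B *v x = 0"
  proof (rule psd_form_zero_imp_kernel)
    show "transpose B = B" using sym by (simp add: B_def transpose_def vec_eq_iff mat_def)
    show "0 \<le> y \<bullet> (B *v y)" for y using rayleigh[of y] by (simp add: Bv inner_diff_right)
    show "x \<bullet> (B *v x) = 0" using x by (simp add: Bv inner_diff_right mu_def dot_square_norm)
  qed
  moreover have "x \<noteq> 0" using x by auto
  ultimately show ?thesis by (metis Bv eq_iff_diff_eq_0)
qed

lemma symmetric_matrix_finite_eigenvalues:
  fixes A :: "real^'n^'n"
  assumes sym: "transpose A = A"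
  shows "finite {c. \<exists>v. v \<noteq> 0 \<and> A *v v = c *\<^sub>R v}"
proof -
  let ?S = "{c. \<exists>v. v \<noteq> 0 \<and> A *v v = c *\<^sub>R v}"
  define g where "g c = (SOME v. v \<noteq> 0 \<and> A *v v = c *\<^sub>R v)" for c
  have g: "g c \<noteq> 0 \<and> A *v g c = c *\<^sub>R g c" if "c \<in> ?S" for c
  proof -
    from that obtain v where "v \<noteq> 0 \<and> A *v v = c *\<^sub>R v" by blast
    then show ?thesis unfolding g_def by (rule someI)
  qed
  have orth: "g c \<bullet> g d = 0" if "c \<in> ?S" "d \<in> ?S" "c \<noteq> d" for c d
  proof -
    have "c * (g c \<bullet> g d) = (A *v g c) \<bullet> g d" using g[OF that(1)] by simp
    also have "\<dots> = g c \<bullet> (A *v g d)"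
      using symmetric_matrix_inner_commute[OF sym, of "g d" "g c"] by (simp add: inner_commute)
    also have "\<dots> = d * (g c \<bullet> g d)" using g[OF that(2)] by simp
    finally show ?thesis using that(3) by simp
  qed
  have "inj_on g ?S"
  proof (rule inj_onI, rule ccontr)
    fix c d assume cd: "c \<in> ?S" "d \<in> ?S" "g c = g d" "c \<noteq> d"
    hence "g c \<bullet> g c = 0" using orth[of c d] by simp
    thus False using g \<open>c \<in> ?S\<close> by simp
  qed
  moreover have "finite (g ` ?S)"
    by (rule pairwise_orthogonal_imp_finite) (auto simp: pairwise_def orthogonal_def intro: orth)
  ultimately show ?thesis by (simp add: finite_image_iff)
qed

lemma largest_eigenvalue_is_eigenvalue:
  fixes A :: "real^'n^'n"
  assumes "transpose A = A"
  shows "\<exists>v. v \<noteq> 0 \<and> A *v v = largest_eigenvalue A *\<^sub>R v"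
proof -
  let ?S = "{c. \<exists>v. v \<noteq> 0 \<and> A *v v = c *\<^sub>R v}"
  have "Max ?S \<in> ?S"
    using symmetric_matrix_finite_eigenvalues[OF assms] symmetric_matrix_has_eigenvector[OF assms]
    by (intro Max_in) auto
  thus ?thesis unfolding largest_eigenvalue_def by blast
qed

lemma adj_matrix_mult_vec:
  "(adj_matrix E *v x) $ i = (\<Sum>j | E i j. x $ j)"
proof -
  have "(adj_matrix E *v x) $ i = (\<Sum>j\<in>UNIV. if E i j then x $ j else 0)"
    by (auto simp: adj_matrix_def matrix_vector_mult_def intro!: sum.cong)
  thus ?thesis by (simp add: sum.inter_filter[symmetric])
qed

lemma transpose_adj_matrix:
  assumes "simple_graph E"
  shows "transpose (adj_matrix E) = adj_matrix E"
  using assms by (auto simp: simple_graph_def adj_matrix_def transpose_def vec_eq_iff)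

lemma spectral_radius_graph_is_eigenvalue:
  assumes "simple_graph E"
  shows "\<exists>v. v \<noteq> 0 \<and> adj_matrix E *v v = spectral_radius_graph E *\<^sub>R v"
  unfolding spectral_radius_graph_def
  by (rule largest_eigenvalue_is_eigenvalue[OF transpose_adj_matrix[OF assms]])

section \<open>Stanley's bound\<close>

definition degree :: "('a \<Rightarrow> 'a \<Rightarrow> bool) \<Rightarrow> 'a \<Rightarrow> nat" where
  "degree E x = card {y. E x y}"

lemma simple_graph_sym: "simple_graph E \<Longrightarrow> E x y \<longleftrightarrow> E y x"
  and simple_graph_irrefl: "simple_graph E \<Longrightarrow> \<not> E x x"
  unfolding simple_graph_def by blast+

lemma eigenvector_entry_square_bound:
  fixes E :: "'a::finite \<Rightarrow> 'a \<Rightarrow> bool"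
  assumes sg: "simple_graph E" and ev: "adj_matrix E *v v = l *\<^sub>R v"
  shows "l\<^sup>2 * (v $ i)\<^sup>2 \<le> degree E i * ((\<Sum>j\<in>UNIV. (v $ j)\<^sup>2) - (v $ i)\<^sup>2)"
proof -
  have "l\<^sup>2 * (v $ i)\<^sup>2 = (\<Sum>j | E i j. v $ j)\<^sup>2"
    using arg_cong[OF ev, of "\<lambda>w. w $ i"] by (simp add: adj_matrix_mult_vec power_mult_distrib)
  also have "\<dots> \<le> degree E i * (\<Sum>j | E i j. (v $ j)\<^sup>2)"
    using sum_squared_le_sum_of_squares[of "\<lambda>j. v $ j" "{j. E i j}"]
    by (simp add: degree_def mult.commute)
  also have "(\<Sum>j | E i j. (v $ j)\<^sup>2) \<le> (\<Sum>j\<in>UNIV - {i}. (v $ j)\<^sup>2)"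
    using simple_graph_irrefl[OF sg] by (intro sum_mono2) auto
  also have "\<dots> = (\<Sum>j\<in>UNIV. (v $ j)\<^sup>2) - (v $ i)\<^sup>2"
    by (simp add: sum_diff1)
  finally show ?thesis by (simp add: mult_left_mono)
qed

lemma eigenvalue_le_degree_weighted:
  fixes E :: "'a::finite \<Rightarrow> 'a \<Rightarrow> bool"
  assumes sg: "simple_graph E" and ev: "adj_matrix E *v v = l *\<^sub>R v"
  shows "l * (\<Sum>i\<in>UNIV. (v $ i)\<^sup>2) \<le> (\<Sum>i\<in>UNIV. degree E i * (v $ i)\<^sup>2)"
proof -
  have row: "(\<Sum>j | E i j. v $ j) = l * v $ i" for i
    using arg_cong[OF ev, of "\<lambda>w. w $ i"] by (simp add: adj_matrix_mult_vec)
  have "l * (\<Sum>i\<in>UNIV. (v $ i)\<^sup>2) = (\<Sum>i\<in>UNIV. v $ i * (\<Sum>j | E i j. v $ j))"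
    by (simp add: row sum_distrib_left power2_eq_square mult_ac)
  also have "\<dots> = (\<Sum>i\<in>UNIV. \<Sum>j | E i j. v $ i * v $ j)"
    by (simp add: sum_distrib_left)
  also have "\<dots> \<le> (\<Sum>i\<in>UNIV. \<Sum>j | E i j. ((v $ i)\<^sup>2 + (v $ j)\<^sup>2) / 2)"
    using sum_squares_bound by (intro sum_mono) (simp add: field_simps)
  also have "\<dots> = (\<Sum>i\<in>UNIV. \<Sum>j | E i j. (v $ i)\<^sup>2)"
  proof -
    have "(\<Sum>i\<in>UNIV. \<Sum>j | E i j. (v $ j)\<^sup>2) = (\<Sum>i\<in>UNIV. \<Sum>j | E i j. (v $ i)\<^sup>2)"
      using sum.swap_restrict[of UNIV UNIV "\<lambda>i j. (v $ j)\<^sup>2" E] simple_graph_sym[OF sg] by simp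
    thus ?thesis by (simp add: sum.distrib add_divide_distrib sum_divide_distrib[symmetric])
  qed
  also have "\<dots> = (\<Sum>i\<in>UNIV. degree E i * (v $ i)\<^sup>2)"
    by (simp add: degree_def)
  finally show ?thesis .
qed

lemma eigenvalue_stanley_bound:
  fixes E :: "'a::finite \<Rightarrow> 'a \<Rightarrow> bool"
  assumes sg: "simple_graph E" and "v \<noteq> 0" and ev: "adj_matrix E *v v = l *\<^sub>R v"
  shows "l\<^sup>2 + l \<le> (\<Sum>i\<in>UNIV. degree E i)"
proof -
  define s where "s = (\<Sum>i\<in>UNIV. (v $ i)\<^sup>2)"
  obtain k where "v $ k \<noteq> 0" using \<open>v \<noteq> 0\<close> by (metis vec_eq_iff zero_index)
  hence "0 < (v $ k)\<^sup>2" by simp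
  also have "\<dots> \<le> s" unfolding s_def by (rule member_le_sum) auto
  finally have "s > 0" .
  have "l\<^sup>2 * s \<le> (\<Sum>i\<in>UNIV. degree E i * (s - (v $ i)\<^sup>2))"
    unfolding s_def sum_distrib_left
    by (intro sum_mono eigenvector_entry_square_bound[OF sg ev])
  also have "\<dots> = (\<Sum>i\<in>UNIV. degree E i) * s - (\<Sum>i\<in>UNIV. degree E i * (v $ i)\<^sup>2)"
    by (simp add: right_diff_distrib sum_subtractf sum_distrib_right)
  finally have "(l\<^sup>2 + l) * s \<le> (\<Sum>i\<in>UNIV. degree E i) * s"
    using eigenvalue_le_degree_weighted[OF sg ev] by (simp add: s_def distrib_right)
  thus ?thesis using \<open>s > 0\<close> by simp
qed

section \<open>Hamiltonian paths and the closure step\<close>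

lemma length_distinct_UNIV:
  assumes "distinct (p::'a::finite list)" "set p = UNIV"
  shows "length p = CARD('a)"
  using assms distinct_card by fastforce

lemma involution_reindex:
  assumes "distinct p" and bound: "\<And>i. i < length p \<Longrightarrow> f i < length p"
    and inv: "\<And>i. f (f i) = i"
  shows "distinct (map (\<lambda>i. p ! f i) [0..<length p])"
    and "set (map (\<lambda>i. p ! f i) [0..<length p]) = set p"
proof -
  have "f ` {0..<length p} = {0..<length p}"
    using bound inv by (auto simp: image_iff) (metis atLeastLessThan_iff bound zero_le)
  thus "set (map (\<lambda>i. p ! f i) [0..<length p]) = set p"
    by (metis image_image list.set_map map_nth set_upt)
  show "distinct (map (\<lambda>i. p ! f i) [0..<length p])"
    unfolding distinct_map
    using \<open>distinct p\<close> bound by (auto simp: inj_on_def nth_eq_iff_index_eq) (metis inv)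
qed

lemma ham_path_two_opt:
  fixes p :: "'a::finite list"
  assumes dp: "distinct p" and sp: "set p = UNIV" and lr: "l < r" and rn: "Suc r < length p"
    and edges: "\<And>i. Suc i < length p \<Longrightarrow> i \<noteq> l \<Longrightarrow> i \<noteq> r \<Longrightarrow> E (p ! i) (p ! Suc i)"
    and sym: "\<And>x y. E x y \<Longrightarrow> E y x"
    and chord_l: "E (p ! l) (p ! r)" and chord_r: "E (p ! Suc l) (p ! Suc r)"
  shows "\<exists>q. ham_path E (hd p) (last p) q"
proof -
  \<comment> \<open>Reversing the segment between positions \<open>l + 1\<close> and \<open>r\<close> trades the path edges at
    positions \<open>l\<close> and \<open>r\<close> for the two chords.\<close>
  define f where "f i = (if l < i \<and> i \<le> r then l + r + 1 - i else i)" for i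
  define q where "q = map (\<lambda>i. p ! f i) [0..<length p]"
  have f_bound: "f i < length p" if "i < length p" for i
    using that rn lr unfolding f_def by auto
  have "f (f i) = i" for i unfolding f_def by auto
  note reindex = involution_reindex[OF dp f_bound this, folded q_def]
  have q_nth: "q ! i = p ! f i" if "i < length p" for i unfolding q_def using that by simp
  have "q \<noteq> []" "p \<noteq> []" using rn by (auto simp: q_def)
  moreover have "f 0 = 0" "f (length p - 1) = length p - 1" using rn by (auto simp: f_def)
  ultimately have "hd q = hd p" "last q = last p"
    using q_nth[of 0] q_nth[of "length p - 1"] by (auto simp: hd_conv_nth last_conv_nth q_def)
  moreover have "E (q ! i) (q ! Suc i)" if "Suc i < length q" for i
  proof -
    have i: "Suc i < length p" using that by (simp add: q_def)
    consider "i < l \<or> r < i" | "i = l" | "l < i \<and> i < r" | "i = r" by linarith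
    thus ?thesis
    proof cases
      case 1 thus ?thesis using edges[OF i] lr i q_nth[of i] q_nth[of "Suc i"] by (auto simp: f_def)
    next
      case 2 thus ?thesis using chord_l i q_nth[of i] q_nth[of "Suc i"] lr by (simp add: f_def)
    next
      case 3
      hence "E (p ! (l + r - i)) (p ! Suc (l + r - i))" using rn by (intro edges) auto
      moreover have "Suc (l + r - i) = l + r + 1 - i" using 3 by auto
      ultimately show ?thesis using 3 i q_nth[of i] q_nth[of "Suc i"] sym by (auto simp: f_def)
    next
      case 4 thus ?thesis using chord_r i q_nth[of i] q_nth[of "Suc i"] lr by (simp add: f_def)
    qed
  qed
  ultimately have "ham_path E (hd p) (last p) q"
    using reindex sp rn unfolding ham_path_def by (auto simp: q_def)
  thus ?thesis by blast
qed

lemma card_indices_nth: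
  fixes p :: "'a::finite list"
  assumes "distinct p" and "set p = UNIV"
  shows "card {j. j < length p \<and> P (p ! j)} = card {z. P z}"
proof -
  have "{z. P z} = (!) p ` {j. j < length p \<and> P (p ! j)}"
    using \<open>set p = UNIV\<close> by (auto simp: image_iff) (metis UNIV_I in_set_conv_nth)
  moreover have "inj_on ((!) p) {j. j < length p \<and> P (p ! j)}"
    using \<open>distinct p\<close> by (auto simp: inj_on_def nth_eq_iff_index_eq)
  ultimately show ?thesis by (simp add: card_image)
qed

lemma exists_crossing_chords:
  fixes p :: "'a::finite list"
  assumes sg: "simple_graph E" and dp: "distinct p" and sp: "set p = UNIV"
    and kn: "Suc k < length p"
    and deg: "degree E (p ! k) + degree E (p ! Suc k) \<ge> CARD('a) + 1"
  shows "\<exists>j. j \<noteq> k \<and> Suc j < length p \<and> E (p ! k) (p ! j) \<and> E (p ! Suc k) (p ! Suc j)"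
proof -
  define n where "n = length p"
  define S where "S = {j. j < n - 1 \<and> E (p ! k) (p ! j)}"
  define T where "T = {j. j < n - 1 \<and> E (p ! Suc k) (p ! Suc j)}"
  have "degree E (p ! k) = card {j. j < n \<and> E (p ! k) (p ! j)}"
    unfolding degree_def n_def using card_indices_nth[OF dp sp] by simp
  also have "\<dots> \<le> card (insert (n - 1) S)" by (rule card_mono) (auto simp: S_def)
  also have "\<dots> \<le> card S + 1" by (simp add: card_insert_if S_def)
  finally have degS: "degree E (p ! k) \<le> card S + 1" .
  have "degree E (p ! Suc k) = card {j. j < n \<and> E (p ! Suc k) (p ! j)}"
    unfolding degree_def n_def using card_indices_nth[OF dp sp] by simp
  also have "\<dots> \<le> card (insert 0 (Suc ` T))"
  proof (rule card_mono)
    show "{j. j < n \<and> E (p ! Suc k) (p ! j)} \<subseteq> insert 0 (Suc ` T)"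
    proof
      fix j assume "j \<in> {j. j < n \<and> E (p ! Suc k) (p ! j)}"
      thus "j \<in> insert 0 (Suc ` T)" by (cases j) (auto simp: T_def)
    qed
  qed (simp add: T_def)
  also have "\<dots> \<le> card T + 1" by (simp add: card_insert_if card_image T_def)
  finally have degT: "degree E (p ! Suc k) \<le> card T + 1" .
  \<comment> \<open>Neither \<open>S\<close> nor \<open>T\<close> contains \<open>k\<close>, so they cannot be disjoint subsets of \<open>{0..<n-1} - {k}\<close>.\<close>
  have "S \<union> T \<subseteq> {0..<n-1} - {k}"
    using simple_graph_irrefl[OF sg] by (auto simp: S_def T_def)
  hence "card (S \<union> T) \<le> card ({0..<n-1} - {k})" by (intro card_mono) auto
  also have "\<dots> = n - 2" using kn by (simp add: n_def)
  finally have "card (S \<union> T) \<le> n - 2" .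
  hence "S \<inter> T \<noteq> {}"
    using degS degT deg kn length_distinct_UNIV[OF dp sp]
    by (auto simp: card_Un_disjoint S_def T_def n_def)
  then obtain j where "j \<in> S" "j \<in> T" by blast
  moreover have "j \<noteq> k" using \<open>j \<in> S\<close> simple_graph_irrefl[OF sg] by (auto simp: S_def)
  ultimately show ?thesis by (auto simp: S_def T_def n_def)
qed

definition add_edge :: "('a \<Rightarrow> 'a \<Rightarrow> bool) \<Rightarrow> 'a \<Rightarrow> 'a \<Rightarrow> 'a \<Rightarrow> 'a \<Rightarrow> bool" where
  "add_edge E x y = (\<lambda>a b. E a b \<or> (a = x \<and> b = y) \<or> (a = y \<and> b = x))"

lemma simple_graph_add_edge:
  "simple_graph E \<Longrightarrow> x \<noteq> y \<Longrightarrow> simple_graph (add_edge E x y)"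
  unfolding simple_graph_def add_edge_def by blast

lemma hamilton_connected_of_add_edge:
  fixes E :: "'a::finite \<Rightarrow> 'a \<Rightarrow> bool"
  assumes sg: "simple_graph E"
    and deg: "degree E x + degree E y \<ge> CARD('a) + 1"
    and hc: "hamilton_connected (add_edge E x y)"
  shows "hamilton_connected E"
  unfolding hamilton_connected_def
proof (intro allI impI)
  fix u v :: 'a assume "u \<noteq> v"
  then obtain p where "ham_path (add_edge E x y) u v p"
    using hc unfolding hamilton_connected_def by blast
  hence dp: "distinct p" and sp: "set p = UNIV" and ends: "hd p = u" "last p = v"
    and path: "\<And>i. Suc i < length p \<Longrightarrow> add_edge E x y (p ! i) (p ! Suc i)"
    unfolding ham_path_def by auto
  show "\<exists>q. ham_path E u v q"
  proof (cases "\<forall>i. Suc i < length p \<longrightarrow> E (p ! i) (p ! Suc i)")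
    case True
    thus ?thesis using \<open>ham_path (add_edge E x y) u v p\<close> unfolding ham_path_def by blast
  next
    case False
    then obtain k where kn: "Suc k < length p" and "\<not> E (p ! k) (p ! Suc k)" by blast
    hence new: "{p ! k, p ! Suc k} = {x, y}"
      using path[OF kn] unfolding add_edge_def by auto
    have old: "E (p ! i) (p ! Suc i)" if "Suc i < length p" "i \<noteq> k" for i
    proof (rule ccontr)
      assume "\<not> E (p ! i) (p ! Suc i)"
      hence "{p ! i, p ! Suc i} = {x, y}" using path[OF that(1)] unfolding add_edge_def by auto
      with new that kn dp show False by (auto simp: doubleton_eq_iff nth_eq_iff_index_eq)
    qed
    have "degree E (p ! k) + degree E (p ! Suc k) \<ge> CARD('a) + 1"
      using deg new by (auto simp: doubleton_eq_iff)
    then obtain j where j: "j \<noteq> k" "Suc j < length p"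
      and chords: "E (p ! k) (p ! j)" "E (p ! Suc k) (p ! Suc j)"
      using exists_crossing_chords[OF sg dp sp kn] by blast
    have sym: "\<And>a b. E a b \<Longrightarrow> E b a" using simple_graph_sym[OF sg] by blast
    have "\<exists>q. ham_path E (hd p) (last p) q"
    proof (cases "j < k")
      case True
      with j kn old chords show ?thesis
        by (intro ham_path_two_opt[OF dp sp True kn _ sym]) (auto intro: sym)
    next
      case False
      with j old chords show ?thesis
        by (intro ham_path_two_opt[OF dp sp _ j(2) _ sym]) auto
    qed
    thus ?thesis using ends by simp
  qed
qed

lemma hamilton_connected_complete:
  fixes E :: "'a::finite \<Rightarrow> 'a \<Rightarrow> bool"
  assumes "\<And>a b. a \<noteq> b \<Longrightarrow> E a b"
  shows "hamilton_connected E"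
  unfolding hamilton_connected_def
proof (intro allI impI)
  fix u v :: 'a assume "u \<noteq> v"
  obtain xs where xs: "distinct xs" "set xs = UNIV - {u, v}"
    using finite_distinct_list[of "UNIV - {u, v}"] by auto
  define p where "p = u # xs @ [v]"
  have "distinct p" unfolding p_def using xs \<open>u \<noteq> v\<close> by auto
  hence "E (p ! i) (p ! Suc i)" if "Suc i < length p" for i
    using that by (intro assms) (simp add: nth_eq_iff_index_eq)
  with \<open>distinct p\<close> have "ham_path E u v p"
    unfolding ham_path_def using xs by (auto simp: p_def)
  thus "\<exists>p. ham_path E u v p" by blast
qed

section \<open>Counting non-edges\<close>

definition nondegree :: "('a \<Rightarrow> 'a \<Rightarrow> bool) \<Rightarrow> 'a \<Rightarrow> nat" where
  "nondegree E x = card {y. y \<noteq> x \<and> \<not> E x y}"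

text \<open>\<open>nondegree_sum E\<close> is twice the number of edges of the complement of \<open>E\<close>.\<close>

definition nondegree_sum :: "('a::finite \<Rightarrow> 'a \<Rightarrow> bool) \<Rightarrow> nat" where
  "nondegree_sum E = (\<Sum>x\<in>UNIV. nondegree E x)"

lemma nondegree_eq_sum:
  "nondegree E (x::'a::finite) = (\<Sum>y\<in>UNIV. of_bool (x \<noteq> y \<and> \<not> E x y))"
  by (simp add: nondegree_def eq_commute)

lemma degree_add_nondegree:
  fixes E :: "'a::finite \<Rightarrow> 'a \<Rightarrow> bool"
  assumes "simple_graph E"
  shows "degree E x + nondegree E x = CARD('a) - 1"
proof -
  have "{y. E x y} \<union> {y. y \<noteq> x \<and> \<not> E x y} = UNIV - {x}"
    using simple_graph_irrefl[OF assms] by auto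
  hence "card {y. E x y} + card {y. y \<noteq> x \<and> \<not> E x y} = card (UNIV - {x})"
    by (metis (mono_tags, lifting) card_Un_disjoint disjoint_iff finite mem_Collect_eq)
  thus ?thesis by (simp add: degree_def nondegree_def)
qed

lemma degree_sum_add_nondegree_sum:
  fixes E :: "'a::finite \<Rightarrow> 'a \<Rightarrow> bool"
  assumes "simple_graph E"
  shows "(\<Sum>x\<in>UNIV. degree E x) + nondegree_sum E = CARD('a) * (CARD('a) - 1)"
  using degree_add_nondegree[OF assms] by (simp add: nondegree_sum_def flip: sum.distrib)

lemma nondegree_sum_add_edge:
  fixes E :: "'a::finite \<Rightarrow> 'a \<Rightarrow> bool"
  assumes sg: "simple_graph E" and "x \<noteq> y" "\<not> E x y"
  shows "nondegree_sum (add_edge E x y) + 2 = nondegree_sum E"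
proof -
  have "nondegree E z = nondegree (add_edge E x y) z + of_bool (z = x) + of_bool (z = y)" for z
  proof -
    have "nondegree E z = (\<Sum>w\<in>UNIV. of_bool (z \<noteq> w \<and> \<not> add_edge E x y z w)
        + of_bool (z = x \<and> w = y) + of_bool (z = y \<and> w = x))"
      unfolding nondegree_eq_sum using assms simple_graph_sym[OF sg]
      by (intro sum.cong) (auto simp: add_edge_def)
    thus ?thesis by (simp add: sum.distrib nondegree_eq_sum)
  qed
  thus ?thesis using \<open>x \<noteq> y\<close> by (simp add: nondegree_sum_def sum.distrib)
qed

lemma nondegree_pair_bound:
  fixes E :: "'a::finite \<Rightarrow> 'a \<Rightarrow> bool"
  assumes sg: "simple_graph E" and xy: "x \<noteq> y" "\<not> E x y"
    and F: "F \<subseteq> UNIV - {x, y}"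
    and F_nonadj: "\<And>z. z \<in> F \<Longrightarrow> \<exists>w. w \<notin> {x, y} \<and> w \<noteq> z \<and> \<not> E z w"
  shows "2 * (nondegree E x + nondegree E y) + card F \<le> nondegree_sum E + 2"
proof -
  define R where "R = UNIV - {x, y}"
  let ?c = "\<lambda>z w. of_bool (z \<noteq> w \<and> \<not> E z w) :: nat"
  have split: "(\<Sum>w\<in>UNIV. f w) = (\<Sum>w\<in>R. f w) + f x + f y" for f :: "'a \<Rightarrow> nat"
    using xy by (simp add: R_def sum.subset_diff[of "{x, y}" UNIV f])
  have c_sym: "?c z w = ?c w z" for z w using simple_graph_sym[OF sg] by auto
  have to_end: "(\<Sum>z\<in>R. ?c z a) + 1 = nondegree E a" if "a \<in> {x, y}" for a
  proof -
    have "nondegree E a = (\<Sum>z\<in>UNIV. ?c z a)"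
      unfolding nondegree_eq_sum by (intro sum.cong) (auto simp: c_sym)
    also have "\<dots> = (\<Sum>z\<in>R. ?c z a) + (?c x a + ?c y a)" by (simp only: split add.assoc)
    also have "?c x a + ?c y a = 1" using that xy simple_graph_sym[OF sg] by auto
    finally show ?thesis by simp
  qed
  have pointwise: "?c z x + ?c z y + of_bool (z \<in> F) \<le> nondegree E z" if "z \<in> R" for z
  proof -
    have "of_bool (z \<in> F) \<le> (\<Sum>w\<in>R. ?c z w)"
    proof (cases "z \<in> F")
      case True
      then obtain w where "w \<in> R" "w \<noteq> z" "\<not> E z w" using F_nonadj by (auto simp: R_def)
      hence "?c z w \<le> (\<Sum>w\<in>R. ?c z w)" by (intro member_le_sum) auto
      thus ?thesis using True \<open>w \<noteq> z\<close> \<open>\<not> E z w\<close> by simp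
    qed simp
    thus ?thesis using split[of "?c z"] by (simp add: nondegree_eq_sum)
  qed
  have "(\<Sum>z\<in>R. of_bool (z \<in> F)) = card F"
    using F by (simp add: R_def Int_absorb1)
  moreover have "(\<Sum>z\<in>R. ?c z x + ?c z y + of_bool (z \<in> F)) \<le> (\<Sum>z\<in>R. nondegree E z)"
    by (rule sum_mono) (rule pointwise)
  ultimately have "(\<Sum>z\<in>R. ?c z x) + (\<Sum>z\<in>R. ?c z y) + card F \<le> (\<Sum>z\<in>R. nondegree E z)"
    by (simp only: sum.distrib)
  moreover have "nondegree_sum E = (\<Sum>z\<in>R. nondegree E z) + nondegree E x + nondegree E y"
    unfolding nondegree_sum_def by (rule split)
  ultimately show ?thesis using to_end[of x] to_end[of y] by simp
qed

lemma hamilton_connected_of_light_nonedge: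
  fixes E :: "'a::finite \<Rightarrow> 'a \<Rightarrow> bool"
  assumes sg: "simple_graph E" and light: "nondegree E x + nondegree E y + 3 \<le> CARD('a)"
    and "hamilton_connected (add_edge E x y)"
  shows "hamilton_connected E"
proof (rule hamilton_connected_of_add_edge[OF sg _ assms(3)])
  show "degree E x + degree E y \<ge> CARD('a) + 1"
    using degree_add_nondegree[OF sg, of x] degree_add_nondegree[OF sg, of y] light by linarith
qed

lemma hamilton_connected_if_nondegree_sum_small:
  fixes E :: "'a::finite \<Rightarrow> 'a \<Rightarrow> bool"
  shows "simple_graph E \<Longrightarrow> nondegree_sum E + 7 \<le> 2 * CARD('a) \<Longrightarrow> hamilton_connected E"
proof (induction "nondegree_sum E" arbitrary: E rule: less_induct)
  case less
  show ?case
  proof (cases "\<forall>x y. x \<noteq> y \<longrightarrow> E x y")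
    case True
    thus ?thesis by (intro hamilton_connected_complete) blast
  next
    case False
    then obtain x y where xy: "x \<noteq> y" "\<not> E x y" by blast
    have "2 * (nondegree E x + nondegree E y) + card ({} :: 'a set) \<le> nondegree_sum E + 2"
      by (rule nondegree_pair_bound[OF less.prems(1) xy]) auto
    hence "nondegree E x + nondegree E y + 3 \<le> CARD('a)" using less.prems(2) by simp
    moreover have "hamilton_connected (add_edge E x y)"
      using less.hyps[of "add_edge E x y"] nondegree_sum_add_edge[OF less.prems(1) xy]
        simple_graph_add_edge[OF less.prems(1) xy(1)] less.prems(2)
      by simp
    ultimately show ?thesis by (rule hamilton_connected_of_light_nonedge[OF less.prems(1)])
  qed
qed

section \<open>The extremal graphs\<close>

definition is_K_minus_triangle :: "('a \<Rightarrow> 'a \<Rightarrow> bool) \<Rightarrow> bool" where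
  "is_K_minus_triangle E \<longleftrightarrow>
     (\<exists>T. card T = 3 \<and> (\<forall>x y. E x y \<longleftrightarrow> x \<noteq> y \<and> \<not> (x \<in> T \<and> y \<in> T)))"

lemma heavy_nonedges_intersect:
  fixes E :: "'a::finite \<Rightarrow> 'a \<Rightarrow> bool"
  assumes sg: "simple_graph E" and sparse: "nondegree_sum E + 5 \<le> 2 * CARD('a)"
    and xy: "x \<noteq> y" "\<not> E x y" and heavy: "CARD('a) < nondegree E x + nondegree E y + 3"
    and zt: "z \<noteq> t" "\<not> E z t"
  shows "z \<in> {x, y} \<or> t \<in> {x, y}"
proof (rule ccontr)
  assume "\<not> (z \<in> {x, y} \<or> t \<in> {x, y})"
  hence "2 * (nondegree E x + nondegree E y) + card {z, t} \<le> nondegree_sum E + 2"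
    using zt simple_graph_sym[OF sg] by (intro nondegree_pair_bound[OF sg xy]) auto
  thus False using zt(1) sparse heavy by simp
qed

lemma intersecting_nonedges_star_or_triangle:
  assumes sg: "simple_graph E"
    and meet: "\<And>x y z t. x \<noteq> y \<Longrightarrow> \<not> E x y \<Longrightarrow> z \<noteq> t \<Longrightarrow> \<not> E z t \<Longrightarrow> z \<in> {x, y} \<or> t \<in> {x, y}"
    and ab: "a \<noteq> b" "\<not> E a b"
  shows "(\<forall>z t. z \<noteq> t \<and> \<not> E z t \<longrightarrow> a \<in> {z, t}) \<or> (\<forall>z t. z \<noteq> t \<and> \<not> E z t \<longrightarrow> b \<in> {z, t})
    \<or> is_K_minus_triangle E"
proof -
  have sym: "\<And>x y. E x y \<longleftrightarrow> E y x" and irr: "\<And>x. \<not> E x x"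
    using simple_graph_sym[OF sg] simple_graph_irrefl[OF sg] by blast+
  have ?thesis if avoid_a: "z1 \<noteq> t1" "\<not> E z1 t1" "a \<notin> {z1, t1}"
    and avoid_b: "z2 \<noteq> t2" "\<not> E z2 t2" "b \<notin> {z2, t2}" for z1 t1 z2 t2
  proof -
    have "z1 = b \<or> t1 = b" using meet[OF ab avoid_a(1,2)] avoid_a(3) by auto
    then obtain c where c: "c \<noteq> a" "c \<noteq> b" "\<not> E b c"
    proof (elim disjE)
      assume "z1 = b" with avoid_a show ?thesis by (intro that[of t1]) auto
    next
      assume "t1 = b" with avoid_a sym show ?thesis by (intro that[of z1]) auto
    qed
    have "z2 = a \<or> t2 = a" using meet[OF ab avoid_b(1,2)] avoid_b(3) by auto
    then obtain d where d: "d \<noteq> a" "d \<noteq> b" "\<not> E a d"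
    proof (elim disjE)
      assume "z2 = a" with avoid_b show ?thesis by (intro that[of t2]) auto
    next
      assume "t2 = a" with avoid_b sym show ?thesis by (intro that[of z2]) auto
    qed
    have "d = c" using meet[of b c a d] c d ab by auto
    with d have ac: "\<not> E a c" by simp
    have "E z w \<longleftrightarrow> z \<noteq> w \<and> \<not> (z \<in> {a, b, c} \<and> w \<in> {a, b, c})" for z w
    proof
      show "E z w \<Longrightarrow> z \<noteq> w \<and> \<not> (z \<in> {a, b, c} \<and> w \<in> {a, b, c})"
        using irr sym ab ac c by auto
      assume zw: "z \<noteq> w \<and> \<not> (z \<in> {a, b, c} \<and> w \<in> {a, b, c})"
      show "E z w"
      proof (rule ccontr)
        assume "\<not> E z w"
        thus False using zw meet[of a b z w] meet[of b c z w] meet[of a c z w] ab ac c by auto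
      qed
    qed
    moreover have "card {a, b, c} = 3" using ab c by simp
    ultimately show ?thesis unfolding is_K_minus_triangle_def by blast
  qed
  thus ?thesis by blast
qed

lemma is_K_minus_plus_two_if_nonedge_star:
  fixes E :: "'a::finite \<Rightarrow> 'a \<Rightarrow> bool"
  assumes sg: "simple_graph E" and sparse: "nondegree_sum E + 5 \<le> 2 * CARD('a)"
    and ab: "a \<noteq> b" "\<not> E a b" and heavy: "CARD('a) < nondegree E a + nondegree E b + 3"
    and star: "\<And>z t. z \<noteq> t \<Longrightarrow> \<not> E z t \<Longrightarrow> a \<in> {z, t}"
  shows "is_K_minus_plus_two E"
proof -
  have sym: "\<And>x y. E x y \<longleftrightarrow> E y x" and irr: "\<And>x. \<not> E x x"
    using simple_graph_sym[OF sg] simple_graph_irrefl[OF sg] by blast+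
  have "{w. w \<noteq> b \<and> \<not> E b w} = {a}" using star ab sym by fastforce
  hence "nondegree E b = 1" by (simp add: nondegree_def)
  moreover have "2 * (nondegree E a + nondegree E b) + card ({} :: 'a set) \<le> nondegree_sum E + 2"
    by (rule nondegree_pair_bound[OF sg ab]) auto
  ultimately have "degree E a = 2"
    using degree_add_nondegree[OF sg, of a] sparse heavy by simp
  then obtain p q where pq: "p \<noteq> q" "{w. E a w} = {p, q}" by (auto simp: degree_def card_2_iff)
  hence Ea: "E a w \<longleftrightarrow> w = p \<or> w = q" for w by blast
  hence "p \<noteq> a" "q \<noteq> a" using irr by auto
  show ?thesis unfolding is_K_minus_plus_two_def
  proof (intro exI conjI allI)
    show "p \<noteq> q" "p \<noteq> a" "q \<noteq> a" by fact+
    fix x y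
    have "E x y \<longleftrightarrow> x \<noteq> y" if "x \<noteq> a" "y \<noteq> a" using star[of x y] irr that by auto
    thus "E x y \<longleftrightarrow> (x \<noteq> y \<and> x \<noteq> a \<and> y \<noteq> a) \<or> {x, y} = {a, p} \<or> {x, y} = {a, q}"
      using Ea[of x] Ea[of y] sym[of x y] \<open>p \<noteq> a\<close> \<open>q \<noteq> a\<close> by (auto simp: doubleton_eq_iff)
  qed
qed

lemma card_6_if_K_minus_triangle:
  fixes E :: "'a::finite \<Rightarrow> 'a \<Rightarrow> bool"
  assumes "is_K_minus_triangle E" and sparse: "nondegree_sum E + 5 \<le> 2 * CARD('a)"
    and heavy: "\<And>x y. x \<noteq> y \<Longrightarrow> \<not> E x y \<Longrightarrow> CARD('a) < nondegree E x + nondegree E y + 3"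
  shows "CARD('a) = 6"
proof -
  obtain T where T: "card T = 3" and E: "\<And>x y. E x y \<longleftrightarrow> x \<noteq> y \<and> \<not> (x \<in> T \<and> y \<in> T)"
    using assms(1) unfolding is_K_minus_triangle_def by blast
  have nd: "nondegree E x = (if x \<in> T then 2 else 0)" for x
  proof -
    have "{y. y \<noteq> x \<and> \<not> E x y} = (if x \<in> T then T - {x} else {})" by (auto simp: E)
    thus ?thesis using T by (simp add: nondegree_def card_Diff_singleton)
  qed
  obtain a b c where "T = {a, b, c}" "a \<noteq> b" using T by (auto simp: card_3_iff)
  hence "CARD('a) < 7" using heavy[of a b] by (simp add: E nd)
  moreover have "nondegree_sum E = 6"
    using T by (simp add: nondegree_sum_def nd sum.If_cases)
  ultimately show ?thesis using sparse by simp
qed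

lemma hamilton_connected_or_extremal:
  fixes E :: "'a::finite \<Rightarrow> 'a \<Rightarrow> bool"
  assumes sg: "simple_graph E" and sparse: "nondegree_sum E + 5 \<le> 2 * CARD('a)"
  shows "hamilton_connected E \<or> is_K_minus_plus_two E \<or> (CARD('a) = 6 \<and> is_K_minus_triangle E)"
proof (cases "\<exists>x y. x \<noteq> y \<and> \<not> E x y \<and> nondegree E x + nondegree E y + 3 \<le> CARD('a)")
  case True
  then obtain x y where xy: "x \<noteq> y" "\<not> E x y"
    and light: "nondegree E x + nondegree E y + 3 \<le> CARD('a)" by blast
  have "hamilton_connected (add_edge E x y)"
    using hamilton_connected_if_nondegree_sum_small[OF simple_graph_add_edge[OF sg xy(1)]]
      nondegree_sum_add_edge[OF sg xy] sparse by simp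
  thus ?thesis using hamilton_connected_of_light_nonedge[OF sg light] by blast
next
  case False
  hence heavy: "\<And>x y. x \<noteq> y \<Longrightarrow> \<not> E x y \<Longrightarrow> CARD('a) < nondegree E x + nondegree E y + 3"
    by (meson not_le)
  show ?thesis
  proof (cases "\<forall>x y. x \<noteq> y \<longrightarrow> E x y")
    case True
    thus ?thesis using hamilton_connected_complete by blast
  next
    case False
    then obtain a b where ab: "a \<noteq> b" "\<not> E a b" by blast
    hence ba: "b \<noteq> a" "\<not> E b a" using simple_graph_sym[OF sg] by auto
    have "\<And>x y z t. x \<noteq> y \<Longrightarrow> \<not> E x y \<Longrightarrow> z \<noteq> t \<Longrightarrow> \<not> E z t \<Longrightarrow> z \<in> {x, y} \<or> t \<in> {x, y}"
      using heavy_nonedges_intersect[OF sg sparse _ _ heavy] by blast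
    from intersecting_nonedges_star_or_triangle[OF sg this ab] show ?thesis
      using is_K_minus_plus_two_if_nonedge_star[OF sg sparse ab heavy[OF ab]]
        is_K_minus_plus_two_if_nonedge_star[OF sg sparse ba heavy[OF ba]]
        card_6_if_K_minus_triangle[OF _ sparse heavy] by blast
  qed
qed

lemma K_minus_triangle_eigenvalues:
  fixes E :: "'a::finite \<Rightarrow> 'a \<Rightarrow> bool"
  assumes card: "CARD('a) = 6" and "is_K_minus_triangle E"
    and "v \<noteq> 0" and ev: "adj_matrix E *v v = l *\<^sub>R v"
  shows "l\<^sup>2 - 2 * l - 9 = 0 \<or> l = 0 \<or> l = -1"
proof (rule ccontr)
  assume l: "\<not> (l\<^sup>2 - 2 * l - 9 = 0 \<or> l = 0 \<or> l = -1)"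
  obtain T where T: "card T = 3" and E: "\<And>x y. E x y \<longleftrightarrow> x \<noteq> y \<and> \<not> (x \<in> T \<and> y \<in> T)"
    using assms(2) unfolding is_K_minus_triangle_def by blast
  define R where "R = UNIV - T"
  have R: "card R = 3" using card T by (simp add: R_def card_Diff_subset)
  define sT where "sT = (\<Sum>j\<in>T. v $ j)"
  define sR where "sR = (\<Sum>j\<in>R. v $ j)"
  have row: "l * v $ i = (\<Sum>j | E i j. v $ j)" for i
    using arg_cong[OF ev, of "\<lambda>w. w $ i"] by (simp add: adj_matrix_mult_vec)
  have row_T: "l * v $ i = sR" if "i \<in> T" for i
    using that unfolding row sR_def R_def by (intro sum.cong) (auto simp: E)
  have row_R: "l * v $ i = sT + sR - v $ i" if "i \<in> R" for i
  proof -
    have "{j. E i j} = UNIV - {i}" using that by (auto simp: E R_def)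
    moreover have "(\<Sum>j\<in>UNIV. v $ j) = sT + sR"
      by (simp add: sT_def sR_def R_def sum.subset_diff[of T UNIV])
    ultimately show ?thesis by (simp add: row sum_diff1)
  qed
  have "l * sT = 3 * sR" using T row_T by (simp add: sT_def sum_distrib_left)
  moreover have "l * sR = 3 * (sT + sR) - sR"
    using R row_R by (simp add: sR_def sum_distrib_left sum_subtractf)
  ultimately have "(l\<^sup>2 - 2 * l - 9) * sR = 0"
    by (simp add: algebra_simps power2_eq_square)
  hence "sR = 0" and "sT = 0" using l \<open>l * sT = 3 * sR\<close> by auto
  have "v $ i = 0" for i
  proof (cases "i \<in> T")
    case True thus ?thesis using row_T \<open>sR = 0\<close> l by simp
  next
    case False
    hence "(l + 1) * v $ i = 0" using row_R \<open>sR = 0\<close> \<open>sT = 0\<close> by (simp add: R_def algebra_simps)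
    thus ?thesis using l by simp
  qed
  thus False using \<open>v \<noteq> 0\<close> by (simp add: vec_eq_iff)
qed

lemma K_minus_triangle_eigenvalue_bound:
  fixes E :: "'a::finite \<Rightarrow> 'a \<Rightarrow> bool"
  assumes "CARD('a) = 6" and "is_K_minus_triangle E"
    and "v \<noteq> 0" and "adj_matrix E *v v = l *\<^sub>R v"
  shows "l\<^sup>2 + l \<le> 22"
proof -
  consider "l\<^sup>2 = 2 * l + 9" | "l = 0" | "l = -1"
    using K_minus_triangle_eigenvalues[OF assms] by fastforce
  thus ?thesis
  proof cases
    case 1
    have "l \<le> 13 / 3"
    proof (rule ccontr)
      assume "\<not> l \<le> 13 / 3"
      hence "13 / 3 * (7 / 3) < l * (l - 2)" by (intro mult_strict_mono) auto
      thus False using 1 by (simp add: power2_eq_square algebra_simps)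
    qed
    thus ?thesis using 1 by simp
  qed auto
qed

lemma nondegree_sum_bound_of_eigenvalue:
  fixes E :: "'a::finite \<Rightarrow> 'a \<Rightarrow> bool"
  assumes sg: "simple_graph E" and "v \<noteq> 0" and "adj_matrix E *v v = l *\<^sub>R v"
    and large: "l\<^sup>2 + l > (real CARD('a))\<^sup>2 - 3 * real CARD('a) + 4"
  shows "nondegree_sum E + 5 \<le> 2 * CARD('a)"
proof -
  have "real (\<Sum>x\<in>UNIV. degree E x) + real (nondegree_sum E) = real CARD('a) * (real CARD('a) - 1)"
    using arg_cong[OF degree_sum_add_nondegree_sum[OF sg], of real]
    by (simp add: of_nat_diff Suc_leI)
  hence "real (nondegree_sum E) < 2 * real CARD('a) - 4"
    using eigenvalue_stanley_bound[OF assms(1-3)] large by (simp add: power2_eq_square algebra_simps)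
  thus ?thesis by linarith
qed

theorem theorem3p1:
  fixes E :: "'a::finite \<Rightarrow> 'a \<Rightarrow> bool" and n :: nat
  assumes "simple_graph E"
    and "n = CARD('a)"
    and "spectral_radius_graph E > - 1/2 + sqrt ((real n - 3/2)^2 + 2)"
  shows "hamilton_connected E \<or> is_K_minus_plus_two E"
proof -
  let ?\<mu> = "spectral_radius_graph E"
  obtain v where v: "v \<noteq> 0" "adj_matrix E *v v = ?\<mu> *\<^sub>R v"
    using spectral_radius_graph_is_eigenvalue[OF assms(1)] by blast
  have "sqrt ((real n - 3/2)\<^sup>2 + 2) < ?\<mu> + 1/2" using assms(3) by simp
  hence "(sqrt ((real n - 3/2)\<^sup>2 + 2))\<^sup>2 < (?\<mu> + 1/2)\<^sup>2"
    by (intro power_strict_mono) auto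
  hence "(real n - 3/2)\<^sup>2 + 2 < (?\<mu> + 1/2)\<^sup>2" by simp
  hence large: "?\<mu>\<^sup>2 + ?\<mu> > (real n)\<^sup>2 - 3 * real n + 4"
    by (simp add: power2_eq_square algebra_simps)
  have "nondegree_sum E + 5 \<le> 2 * CARD('a)"
    by (rule nondegree_sum_bound_of_eigenvalue[OF assms(1) v]) (use large assms(2) in simp)
  moreover have "\<not> (CARD('a) = 6 \<and> is_K_minus_triangle E)"
  proof
    assume extremal: "CARD('a) = 6 \<and> is_K_minus_triangle E"
    hence "?\<mu>\<^sup>2 + ?\<mu> \<le> 22" using K_minus_triangle_eigenvalue_bound v by blast
    thus False using large assms(2) extremal by simp
  qed
  ultimately show ?thesis using hamilton_connected_or_extremal[OF assms(1)] by blast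
qed

end
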